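(* In the setting of the context, let $z^\odot\in\overline{\mathbb{U}}$ be such that the stable root $\kappa_s$ extends continuously to $z^\odot$ with value $\kappa_s(z^\odot)$, and suppose $\lim_{z\to z^\odot,\,z\in\mathbb{U}}\langle KL\rangle(z)=0$. Then $(z^\odot,\kappa_s(z^\odot))$ is a shared eigenvalue between bulk and boundary scheme, i.e. $\det\big(z^\odot I_q-\sum_{\ell=0}^{w}B_{0,\ell}\kappa_s(z^\odot)^\ell\big)=0$ (in addition to $\kappa_s(z^\odot)$ being a root of the bulk characteristic equation at $z^\odot$).
   Context: Notation: $\mathbb{D}=\{|z|<1\}$, $\mathbb{U}=\{|z|>1\}$, $\overline{\mathbb{U}}=\{|z|\geq1\}$; $e_i$ canonical basis vectors. Data: $q\geq2$, pairwise distinct velocities $c_i\in\mathbb{Z}$ with $\max_ic_i=1$ and $\pi$ the unique index with $c_\pi=1$; invertible $M\in\mathbb{R}^{q\times q}$; $s_1\in\mathbb{R}$, $s_2,\dots,s_q\in(0,2]$; $\epsilon\in\mathbb{R}^q$, $\epsilon_1=1$; $K:=I_q+\mathrm{diag}(s_1,\dots,s_q)(\epsilon e_1^{\mathsf T}-I_q)$; $\hat E(\kappa):=M\mathrm{diag}(\kappa^{-c_1},\dots,\kappa^{-c_q})M^{-1}K$. The scheme is von Neumann stable ($\mathrm{sp}\hat E(e^{i\vartheta})\subset\{|z|\le1\}$ for all real $\vartheta$), and $\det(zI_q-\hat E(\kappa))=d_{-1}(z)\kappa^{-1}+\sum_{\ell=0}^{\bar p}d_\ell(z)\kappa^\ell$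 with $d_{-1}\not\equiv0$. For $z\in\mathbb{U}$, $\kappa_s(z)\in\mathbb{D}$ is the stable root of $\det(zI_q-\hat E(\kappa))=0$, and $\varphi_s(z)$ spans $\ker(zI_q-\hat E(\kappa_s(z)))$, normalized so that its first component equals $1$. Kinetic boundary condition at the ghost point: $f^{n\star}_{\pi,-1}=\sum_{\ell=1}^q\sum_{h=0}^{w}b_{\pi,\ell,1,h}f^{n\star}_{\ell,h}+g^n_{\pi,-1}$ (distribution functions $f=M^{-1}m$), giving boundary matrices $B_{0,\ell}:=M\big(\sum_{i:\,c_i=-\ell}e_ie_i^{\mathsf T}+e_\pi\sum_{h=1}^qb_{\pi,h,1,\ell}e_h^{\mathsf T}\big)M^{-1}K$, $\ell=0,\dots,w$. The Kreiss–Lopatinskii scalar product is $\langle KL\rangle(z):=\big(e_\pi^{\mathsf T}\kappa_s(z)^{-1}-\sum_{\ell=0}^{w}\sum_{h=1}^qe_h^{\mathsf T}b_{\pi,h,1,\ell}\kappa_s(z)^\ell\big)M^{-1}K\varphi_s(z)$. *)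

theory Defs
  imports "HOL-Analysis.Analysis" "HOL-Computational_Algebra.Polynomial"
begin

text \<open>Velocity / distribution indices range over a finite type 'q (q = CARD('q)).
  The distinguished index i1 plays the role of the first index "1".\<close>

definition cmat :: "real^'n^'m \<Rightarrow> complex^'n^'m" where
  "cmat A = (\<chi> i j. complex_of_real (A $ i $ j))"

text \<open>K = I + diag(s)(eps e_1^T - I).\<close>
definition Kmat :: "'q::finite \<Rightarrow> ('q \<Rightarrow> real) \<Rightarrow> ('q \<Rightarrow> real) \<Rightarrow> real^'q^'q" where
  "Kmat i1 s eps = (\<chi> i j. (if i = j then 1 else 0)
      + s i * (eps i * (if j = i1 then 1 else 0) - (if i = j then 1 else 0)))"

definition Ehat :: "real^'q^'q \<Rightarrow> ('q::finite \<Rightarrow> int) \<Rightarrow> real^'q^'q \<Rightarrow> complex \<Rightarrow> complex^'q^'q" where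
  "Ehat M c K \<kappa> = cmat M ** (\<chi> i j. if i = j then \<kappa> powi (- c i) else 0)
      ** cmat (matrix_inv M) ** cmat K"

text \<open>Boundary matrices B_{0,l}; b h l stands for b_{pi,h,1,l}.\<close>
definition Bmat :: "real^'q^'q \<Rightarrow> ('q::finite \<Rightarrow> int) \<Rightarrow> ('q \<Rightarrow> nat \<Rightarrow> real) \<Rightarrow> 'q
      \<Rightarrow> real^'q^'q \<Rightarrow> nat \<Rightarrow> complex^'q^'q" where
  "Bmat M c b p K l = cmat M ** (\<chi> i j. (if i = j \<and> c i = - int l then 1 else 0)
      + (if i = p then complex_of_real (b j l) else 0)) ** cmat (matrix_inv M) ** cmat K"

definition KLprod :: "real^'q^'q \<Rightarrow> real^'q^'q \<Rightarrow> ('q::finite \<Rightarrow> nat \<Rightarrow> real) \<Rightarrow> 'q \<Rightarrow> nat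
      \<Rightarrow> complex \<Rightarrow> complex^'q \<Rightarrow> complex" where
  "KLprod M K b p w \<kappa> \<phi> =
     (let \<psi> = (cmat (matrix_inv M) ** cmat K) *v \<phi> in
       \<psi> $ p / \<kappa> - (\<Sum>l\<le>w. \<Sum>h\<in>UNIV. complex_of_real (b h l) * \<kappa> ^ l * \<psi> $ h))"

end

theory Submission
  imports Defs
begin

(* For |z| > 1 the vector phi_s(z) spans the kernel of z I - Ehat(kappa_s(z)). Applying the
   boundary matrix z I - sum_l kappa^l B_{0,l} to it, every incoming or static velocity cancels,
   because bulk and boundary scheme transport it identically; only the outgoing velocity pi
   survives, and the residual is <KL>(z) M e_pi. As the first component of phi_s(z) is 1,
   Cramer's rule replaces the first column of the boundary matrix by this residual without
   changing its determinant. When z tends to z0 the residual column tends to 0 while all other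
   entries converge, so the boundary determinant vanishes in the limit. The bulk equation follows
   by multiplying the characteristic identity by kappa_s(z) and passing to the limit. *)

lemma matrix_vector_mult_sum_left:
  "(\<Sum>l\<in>S. A l) *v (x::'a::comm_semiring_1^'n) = (\<Sum>l\<in>S. A l *v x)"
  by (induct S rule: infinite_finite_induct) (simp_all add: matrix_vector_mult_add_rdistrib)

lemma mat_matrix_mult_nth: "(mat a ** (A::'a::comm_semiring_1^'n^'m)) $ i $ j = a * A $ i $ j"
  by (simp add: matrix_matrix_mult_def mat_def if_distrib if_distribR cong: if_cong)

lemma mat_matrix_mult_vector: "(mat a ** A) *v (x::'a::comm_semiring_1^'n) = a *s (A *v x)"
  by (simp add: vec_eq_iff matrix_vector_mult_def mat_matrix_mult_nth sum_distrib_left mult.assoc)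

lemma tendsto_det:
  fixes A :: "'a \<Rightarrow> 'b::real_normed_field^'n^'n"
  assumes "\<And>i j. ((\<lambda>x. A x $ i $ j) \<longlongrightarrow> B $ i $ j) F"
  shows "((\<lambda>x. det (A x)) \<longlongrightarrow> det B) F"
  unfolding det_def by (intro tendsto_intros assms)

lemma det_eq_0_if_approximate_kernel_vectors:
  fixes A :: "'a \<Rightarrow> 'b::real_normed_field^'n^'n"
  assumes "F \<noteq> bot"
    and A_lim: "\<And>i j. ((\<lambda>x. A x $ i $ j) \<longlongrightarrow> B $ i $ j) F"
    and residual_lim: "\<And>i. ((\<lambda>x. (A x *v v x) $ i) \<longlongrightarrow> 0) F"
    and normalized: "\<forall>\<^sub>F x in F. v x $ k = 1"
  shows "det B = 0"
proof -
  \<comment> \<open>Cramer's rule: replacing column k of A by A v multiplies det A by v_k = 1.\<close>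
  define C where "C x = (\<chi> i j. if j = k then (A x *v v x) $ i else A x $ i $ j)" for x
  define C0 where "C0 = (\<chi> i j. if j = k then 0 else B $ i $ j)"
  have "((\<lambda>x. det (C x)) \<longlongrightarrow> det C0) F"
    by (rule tendsto_det) (simp add: C_def C0_def A_lim residual_lim)
  moreover have "\<forall>\<^sub>F x in F. det (C x) = det (A x)"
    using normalized by eventually_elim (simp add: C_def cramer_lemma)
  ultimately have "((\<lambda>x. det (A x)) \<longlongrightarrow> det C0) F"
    by (rule Lim_transform_eventually)
  moreover have "det C0 = 0"
    by (rule det_zero_column(1)[of k]) (simp add: C0_def column_def vec_eq_iff)
  ultimately show ?thesis
    using tendsto_unique[OF \<open>F \<noteq> bot\<close> tendsto_det[OF A_lim]] by simp
qed

lemma at_within_exterior_disc_nontrivial: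
  assumes "1 \<le> cmod z0"
  shows "at z0 within {z. 1 < cmod z} \<noteq> bot"
proof -
  have U: "{z::complex. 1 < cmod z} = - cball 0 1"
    by auto
  have "z0 \<in> closure (- cball 0 1)"
    using assms by (simp add: closure_complement)
  then have "z0 islimpt {z. 1 < cmod z}"
    unfolding U by (metis islimpt_closure_open limpt_of_closure open_Compl closed_cball)
  then show ?thesis
    by (simp add: trivial_limit_within)
qed

lemma laurent_poly_eq_0_at_limit:
  fixes dm1 :: "'a::real_normed_field poly" and d :: "nat \<Rightarrow> 'a poly"
  assumes "F \<noteq> bot" and z_lim: "((\<lambda>z. z) \<longlongrightarrow> z0) F" and \<kappa>_lim: "(\<kappa>s \<longlongrightarrow> \<kappa>0) F"
    and "\<forall>\<^sub>F z in F. \<kappa>s z \<noteq> 0 \<and> poly dm1 z / \<kappa>s z + (\<Sum>l\<le>n. poly (d l) z * \<kappa>s z ^ l) = 0"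
  shows "poly dm1 z0 + (\<Sum>l\<le>n. poly (d l) z0 * \<kappa>0 ^ (l + 1)) = 0"
proof -
  have "\<forall>\<^sub>F z in F. poly dm1 z + (\<Sum>l\<le>n. poly (d l) z * \<kappa>s z ^ (l + 1)) = 0"
    using assms(4)
  proof eventually_elim
    case (elim z)
    then have "\<kappa>s z \<noteq> 0" and eq: "poly dm1 z / \<kappa>s z + (\<Sum>l\<le>n. poly (d l) z * \<kappa>s z ^ l) = 0"
      by auto
    have "poly dm1 z + (\<Sum>l\<le>n. poly (d l) z * \<kappa>s z ^ (l + 1))
        = \<kappa>s z * (poly dm1 z / \<kappa>s z + (\<Sum>l\<le>n. poly (d l) z * \<kappa>s z ^ l))"
      using \<open>\<kappa>s z \<noteq> 0\<close> by (simp add: distrib_left sum_distrib_left mult_ac)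
    with eq show ?case
      by simp
  qed
  then have "((\<lambda>z. poly dm1 z + (\<Sum>l\<le>n. poly (d l) z * \<kappa>s z ^ (l + 1))) \<longlongrightarrow> 0) F"
    by (rule tendsto_eventually)
  moreover have "((\<lambda>z. poly dm1 z + (\<Sum>l\<le>n. poly (d l) z * \<kappa>s z ^ (l + 1)))
      \<longlongrightarrow> poly dm1 z0 + (\<Sum>l\<le>n. poly (d l) z0 * \<kappa>0 ^ (l + 1))) F"
    by (intro tendsto_intros z_lim \<kappa>_lim)
  ultimately show ?thesis
    by (rule tendsto_unique[OF \<open>F \<noteq> bot\<close>, symmetric])
qed

definition transport_diag :: "('q::finite \<Rightarrow> int) \<Rightarrow> complex \<Rightarrow> complex^'q^'q" where
  "transport_diag c \<kappa> = (\<chi> i j. if i = j then \<kappa> powi (- c i) else 0)"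

definition boundary_stencil :: "('q::finite \<Rightarrow> int) \<Rightarrow> ('q \<Rightarrow> nat \<Rightarrow> real) \<Rightarrow> 'q \<Rightarrow> nat
      \<Rightarrow> complex^'q^'q" where
  "boundary_stencil c b p l = (\<chi> i j. (if i = j \<and> c i = - int l then 1 else 0)
      + (if i = p then complex_of_real (b j l) else 0))"

definition boundary_char_matrix :: "real^'q^'q \<Rightarrow> ('q::finite \<Rightarrow> int) \<Rightarrow> ('q \<Rightarrow> nat \<Rightarrow> real)
      \<Rightarrow> 'q \<Rightarrow> real^'q^'q \<Rightarrow> nat \<Rightarrow> complex \<Rightarrow> complex \<Rightarrow> complex^'q^'q" where
  "boundary_char_matrix M c b p K w z \<kappa> = mat z - (\<Sum>l\<le>w. mat (\<kappa> ^ l) ** Bmat M c b p K l)"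

lemma Ehat_eq_transport_diag:
  "Ehat M c K \<kappa> = cmat M ** transport_diag c \<kappa> ** cmat (matrix_inv M) ** cmat K"
  by (simp add: Ehat_def transport_diag_def)

lemma Bmat_eq_boundary_stencil:
  "Bmat M c b p K l = cmat M ** boundary_stencil c b p l ** cmat (matrix_inv M) ** cmat K"
  by (simp add: Bmat_def boundary_stencil_def)

lemma transport_diag_mult_vector_nth:
  "(transport_diag c \<kappa> *v \<psi>) $ i = \<kappa> powi (- c i) * \<psi> $ i"
  by (simp add: transport_diag_def matrix_vector_mult_def if_distrib if_distribR cong: if_cong)

lemma boundary_stencil_mult_vector_nth:
  "(boundary_stencil c b p l *v \<psi>) $ i
     = (if c i = - int l then \<psi> $ i else 0)
       + (if i = p then (\<Sum>j\<in>UNIV. complex_of_real (b j l) * \<psi> $ j) else 0)"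
  by (simp add: boundary_stencil_def matrix_vector_mult_def distrib_right sum.distrib
      if_distrib [of "\<lambda>x. x * _"] cong: if_cong)

lemma velocity_eq_neg_nat_if_not_outgoing:
  fixes c :: "'q \<Rightarrow> int"
  assumes "inj c" and "\<forall>i. c i \<le> 1" and "c p = 1" and "\<forall>i. - c i \<le> int w" and "i \<noteq> p"
  shows "\<exists>n\<le>w. c i = - int n"
proof -
  have "c i \<noteq> 1" using assms by (metis injD)
  with assms have "c i \<le> 0" by (metis int_one_le_iff_zero_less not_le order_antisym)
  with assms show ?thesis by (intro exI[of _ "nat (- c i)"]) (auto simp: nat_le_iff)
qed

lemma transport_minus_boundary_stencils:
  fixes c :: "'q::finite \<Rightarrow> int" and \<kappa> :: complex
  assumes c: "inj c" "\<forall>i. c i \<le> 1" "c p = 1" and w: "\<forall>i. - c i \<le> int w" and "\<kappa> \<noteq> 0"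
  shows "transport_diag c \<kappa> *v \<psi> - (\<Sum>l\<le>w. \<kappa> ^ l *s (boundary_stencil c b p l *v \<psi>))
     = (\<psi> $ p / \<kappa> - (\<Sum>l\<le>w. \<Sum>h\<in>UNIV. complex_of_real (b h l) * \<kappa> ^ l * \<psi> $ h)) *s axis p 1"
proof (subst vec_eq_iff, intro allI)
  fix i
  show "(transport_diag c \<kappa> *v \<psi> - (\<Sum>l\<le>w. \<kappa> ^ l *s (boundary_stencil c b p l *v \<psi>))) $ i
     = ((\<psi> $ p / \<kappa> - (\<Sum>l\<le>w. \<Sum>h\<in>UNIV. complex_of_real (b h l) * \<kappa> ^ l * \<psi> $ h))
        *s axis p 1) $ i"
  proof (cases "i = p")
    case True
    then show ?thesis using \<open>c p = 1\<close>
      by (simp add: transport_diag_mult_vector_nth boundary_stencil_mult_vector_nth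
          power_int_def axis_def sum_distrib_left mult_ac divide_inverse)
  next
    case False
    then obtain n where "n \<le> w" and n: "c i = - int n"
      using velocity_eq_neg_nat_if_not_outgoing[OF c w] by blast
    then have "(\<Sum>l\<le>w. \<kappa> ^ l * (if c i = - int l then \<psi> $ i else 0)) = \<kappa> ^ n * \<psi> $ i"
      by (simp add: if_distrib sum.delta cong: if_cong)
    with False n show ?thesis
      by (simp add: transport_diag_mult_vector_nth boundary_stencil_mult_vector_nth axis_def)
  qed
qed

lemma boundary_char_matrix_mult_bulk_kernel:
  fixes c :: "'q::finite \<Rightarrow> int" and \<kappa> :: complex
  assumes c: "inj c" "\<forall>i. c i \<le> 1" "c p = 1" and w: "\<forall>i. - c i \<le> int w" and "\<kappa> \<noteq> 0"
    and ker: "(mat z - Ehat M c K \<kappa>) *v \<phi> = 0"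
  shows "boundary_char_matrix M c b p K w z \<kappa> *v \<phi> = KLprod M K b p w \<kappa> \<phi> *s (cmat M *v axis p 1)"
proof -
  define \<psi> where "\<psi> = (cmat (matrix_inv M) ** cmat K) *v \<phi>"
  have bulk: "mat z *v \<phi> = cmat M *v (transport_diag c \<kappa> *v \<psi>)"
    using ker by (simp add: matrix_vector_mult_diff_rdistrib Ehat_eq_transport_diag \<psi>_def
        matrix_vector_mul_assoc matrix_mul_assoc)
  have boundary: "Bmat M c b p K l *v \<phi> = cmat M *v (boundary_stencil c b p l *v \<psi>)" for l
    by (simp add: Bmat_eq_boundary_stencil \<psi>_def matrix_vector_mul_assoc matrix_mul_assoc)
  have "boundary_char_matrix M c b p K w z \<kappa> *v \<phi>
      = cmat M *v (transport_diag c \<kappa> *v \<psi> - (\<Sum>l\<le>w. \<kappa> ^ l *s (boundary_stencil c b p l *v \<psi>)))"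
    by (simp add: boundary_char_matrix_def matrix_vector_mult_diff_rdistrib
        matrix_vector_mult_sum_left mat_matrix_mult_vector bulk boundary vec.diff vec.sum vec.scale)
  also have "\<dots> = KLprod M K b p w \<kappa> \<phi> *s (cmat M *v axis p 1)"
    unfolding transport_minus_boundary_stencils[OF c w \<open>\<kappa> \<noteq> 0\<close>]
      KLprod_def Let_def \<psi>_def[symmetric] by (rule vec.scale)
  finally show ?thesis .
qed

lemma boundary_char_matrix_nth:
  "boundary_char_matrix M c b p K w z \<kappa> $ i $ j
     = (if i = j then z else 0) - (\<Sum>l\<le>w. \<kappa> ^ l * Bmat M c b p K l $ i $ j)"
  by (simp only: boundary_char_matrix_def vector_minus_component sum_component mat_matrix_mult_nth)
    (simp add: mat_def)

lemma boundary_det_eq_0_if_KLprod_tendsto_0: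
  fixes c :: "'q::finite \<Rightarrow> int" and F :: "complex filter"
  assumes c: "inj c" "\<forall>i. c i \<le> 1" "c p = 1" and w: "\<forall>i. - c i \<le> int w"
    and "F \<noteq> bot" and z_lim: "((\<lambda>z. z) \<longlongrightarrow> z0) F" and \<kappa>_lim: "(\<kappa>s \<longlongrightarrow> \<kappa>0) F"
    and kernel: "\<forall>\<^sub>F z in F. \<kappa>s z \<noteq> 0 \<and> (mat z - Ehat M c K (\<kappa>s z)) *v \<phi>s z = 0 \<and> \<phi>s z $ k = 1"
    and KL_lim: "((\<lambda>z. KLprod M K b p w (\<kappa>s z) (\<phi>s z)) \<longlongrightarrow> 0) F"
  shows "det (boundary_char_matrix M c b p K w z0 \<kappa>0) = 0"
proof (rule det_eq_0_if_approximate_kernel_vectors[OF \<open>F \<noteq> bot\<close>])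
  let ?N = "\<lambda>z. boundary_char_matrix M c b p K w z (\<kappa>s z)"
  show "((\<lambda>z. ?N z $ i $ j) \<longlongrightarrow> boundary_char_matrix M c b p K w z0 \<kappa>0 $ i $ j) F" for i j
    unfolding boundary_char_matrix_nth
    by (cases "i = j") (simp_all add: z_lim \<kappa>_lim tendsto_intros)
  show "((\<lambda>z. (?N z *v \<phi>s z) $ i) \<longlongrightarrow> 0) F" for i
  proof (rule Lim_transform_eventually)
    show "((\<lambda>z. KLprod M K b p w (\<kappa>s z) (\<phi>s z) * (cmat M *v axis p 1) $ i) \<longlongrightarrow> 0) F"
      using KL_lim by (rule tendsto_mult_left_zero)
    show "\<forall>\<^sub>F z in F. KLprod M K b p w (\<kappa>s z) (\<phi>s z) * (cmat M *v axis p 1) $ i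
        = (?N z *v \<phi>s z) $ i"
      using kernel by eventually_elim (simp add: boundary_char_matrix_mult_bulk_kernel[OF c w])
  qed
  show "\<forall>\<^sub>F z in F. \<phi>s z $ k = 1"
    using kernel by eventually_elim simp
qed

theorem mainTheorem5:
  fixes c :: "'q::finite \<Rightarrow> int" and i1 p :: 'q
    and M :: "real^'q^'q" and s eps :: "'q \<Rightarrow> real"
    and b :: "'q \<Rightarrow> nat \<Rightarrow> real" and w :: nat
    and dm1 :: "complex poly" and d :: "nat \<Rightarrow> complex poly" and pbar :: nat
    and \<kappa>s :: "complex \<Rightarrow> complex" and \<phi>s :: "complex \<Rightarrow> complex^'q"
    and z0 \<kappa>0 :: complex
  defines "K \<equiv> Kmat i1 s eps"
  assumes q2: "CARD('q) \<ge> 2"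
    and c_inj: "inj c" and c_max: "\<forall>i. c i \<le> 1" and c_p: "c p = 1"
    and M_inv: "invertible M"
    and s_rng: "\<forall>i. i \<noteq> i1 \<longrightarrow> 0 < s i \<and> s i \<le> 2"
    and eps1: "eps i1 = 1"
    and w_ge: "\<forall>i. - c i \<le> int w"
    and vN: "\<forall>\<theta>::real. \<forall>z. det (mat z - Ehat M c K (cis \<theta>)) = 0 \<longrightarrow> cmod z \<le> 1"
    and char_expand: "\<forall>z \<kappa>. \<kappa> \<noteq> 0 \<longrightarrow>
        det (mat z - Ehat M c K \<kappa>) = poly dm1 z / \<kappa> + (\<Sum>l\<le>pbar. poly (d l) z * \<kappa> ^ l)"
    and dm1_nz: "dm1 \<noteq> 0"
    and \<kappa>s_stable: "\<forall>z. cmod z > 1 \<longrightarrow> \<kappa>s z \<noteq> 0 \<and> cmod (\<kappa>s z) < 1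
        \<and> det (mat z - Ehat M c K (\<kappa>s z)) = 0"
    and \<kappa>s_unique: "\<forall>z \<kappa>. cmod z > 1 \<and> \<kappa> \<noteq> 0 \<and> cmod \<kappa> < 1
        \<and> det (mat z - Ehat M c K \<kappa>) = 0 \<longrightarrow> \<kappa> = \<kappa>s z"
    and \<phi>s_ker: "\<forall>z. cmod z > 1 \<longrightarrow> (\<forall>v. (mat z - Ehat M c K (\<kappa>s z)) *v v = 0
        \<longleftrightarrow> (\<exists>a. v = a *s \<phi>s z))"
    and \<phi>s_norm: "\<forall>z. cmod z > 1 \<longrightarrow> \<phi>s z $ i1 = 1"
    and z0_cl: "cmod z0 \<ge> 1"
    and \<kappa>s_ext: "(\<kappa>s \<longlongrightarrow> \<kappa>0) (at z0 within {z. cmod z > 1})"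
    and \<kappa>s_val: "cmod z0 > 1 \<longrightarrow> \<kappa>0 = \<kappa>s z0"
    and KL_lim: "((\<lambda>z. KLprod M K b p w (\<kappa>s z) (\<phi>s z)) \<longlongrightarrow> 0)
        (at z0 within {z. cmod z > 1})"
  shows "det (mat z0 - (\<Sum>l\<le>w. mat (\<kappa>0 ^ l) ** Bmat M c b p K l)) = 0
     \<and> poly dm1 z0 + (\<Sum>l\<le>pbar. poly (d l) z0 * \<kappa>0 ^ (l + 1)) = 0"
proof -
  let ?F = "at z0 within {z. 1 < cmod z}"
  have "?F \<noteq> bot"
    using z0_cl by (rule at_within_exterior_disc_nontrivial)
  have z_lim: "((\<lambda>z. z) \<longlongrightarrow> z0) ?F"
    by (rule tendsto_ident_at)
  have in_U: "\<forall>\<^sub>F z in ?F. 1 < cmod z"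
    by (simp add: eventually_at_filter)
  have "\<forall>\<^sub>F z in ?F. \<kappa>s z \<noteq> 0 \<and> (mat z - Ehat M c K (\<kappa>s z)) *v \<phi>s z = 0 \<and> \<phi>s z $ i1 = 1"
    using in_U
  proof eventually_elim
    case (elim z)
    then have "(mat z - Ehat M c K (\<kappa>s z)) *v \<phi>s z = 0"
      using \<phi>s_ker by (metis vector_smult_lid)
    with elim show ?case
      using \<kappa>s_stable \<phi>s_norm by blast
  qed
  then have "det (boundary_char_matrix M c b p K w z0 \<kappa>0) = 0"
    using boundary_det_eq_0_if_KLprod_tendsto_0[OF c_inj c_max c_p w_ge \<open>?F \<noteq> bot\<close> z_lim \<kappa>s_ext]
      KL_lim by blast
  moreover have "\<forall>\<^sub>F z in ?F. \<kappa>s z \<noteq> 0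
      \<and> poly dm1 z / \<kappa>s z + (\<Sum>l\<le>pbar. poly (d l) z * \<kappa>s z ^ l) = 0"
    using in_U
  proof eventually_elim
    case (elim z)
    then have "\<kappa>s z \<noteq> 0" and "det (mat z - Ehat M c K (\<kappa>s z)) = 0"
      using \<kappa>s_stable by auto
    then show ?case
      using char_expand by metis
  qed
  then have "poly dm1 z0 + (\<Sum>l\<le>pbar. poly (d l) z0 * \<kappa>0 ^ (l + 1)) = 0"
    by (rule laurent_poly_eq_0_at_limit[OF \<open>?F \<noteq> bot\<close> z_lim \<kappa>s_ext])
  ultimately show ?thesis
    unfolding boundary_char_matrix_def ..
qed

end
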